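(* A finite Boolean inverse monoid is fundamental if and only if its groupoid of atoms is principal.
   Context: An inverse semigroup is a semigroup in which each $s$ has a unique $s^{-1}$ with $s=ss^{-1}s$, $s^{-1}=s^{-1}ss^{-1}$; natural partial order $s\le t$ iff $s=ts^{-1}s$; $a,b$ are compatible if $a^{-1}b,ab^{-1}$ are idempotents. A Boolean inverse monoid is an inverse monoid with zero in which finite compatible subsets have joins with respect to $\le$, multiplication distributes over them, and the idempotents form a Boolean algebra. An inverse semigroup $S$ is fundamental if every element commuting with all idempotents of $S$ is itself an idempotent. An atom is a non-zero element $s$ with $t\le s\Rightarrow t\in\{0,s\}$; the atoms form a groupoid under the restricted product $x\cdot y=xy$, defined when $x^{-1}x=yy^{-1}$. A groupoid is principal if for any identities $e,f$ there is at most one arrow from $e$ to $f$. *)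

theory Defs
  imports Main
begin

definition inverse_semigroup :: "('a \<Rightarrow> 'a \<Rightarrow> 'a) \<Rightarrow> bool" where
  "inverse_semigroup mul \<longleftrightarrow>
     (\<forall>a b c. mul (mul a b) c = mul a (mul b c)) \<and>
     (\<forall>s. \<exists>!t. s = mul (mul s t) s \<and> t = mul (mul t s) t)"

definition sinv :: "('a \<Rightarrow> 'a \<Rightarrow> 'a) \<Rightarrow> 'a \<Rightarrow> 'a" where
  "sinv mul s = (THE t. s = mul (mul s t) s \<and> t = mul (mul t s) t)"

definition idem :: "('a \<Rightarrow> 'a \<Rightarrow> 'a) \<Rightarrow> 'a \<Rightarrow> bool" where
  "idem mul e \<longleftrightarrow> mul e e = e"

definition nleq :: "('a \<Rightarrow> 'a \<Rightarrow> 'a) \<Rightarrow> 'a \<Rightarrow> 'a \<Rightarrow> bool" where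
  "nleq mul s t \<longleftrightarrow> s = mul t (mul (sinv mul s) s)"

definition compatible :: "('a \<Rightarrow> 'a \<Rightarrow> 'a) \<Rightarrow> 'a \<Rightarrow> 'a \<Rightarrow> bool" where
  "compatible mul a b \<longleftrightarrow> idem mul (mul (sinv mul a) b) \<and> idem mul (mul a (sinv mul b))"

definition compatible_set :: "('a \<Rightarrow> 'a \<Rightarrow> 'a) \<Rightarrow> 'a set \<Rightarrow> bool" where
  "compatible_set mul A \<longleftrightarrow> (\<forall>a\<in>A. \<forall>b\<in>A. compatible mul a b)"

definition is_lub_in :: "('a \<Rightarrow> 'a \<Rightarrow> bool) \<Rightarrow> 'a set \<Rightarrow> 'a set \<Rightarrow> 'a \<Rightarrow> bool" where
  "is_lub_in le X A j \<longleftrightarrow> j \<in> X \<and> (\<forall>a\<in>A. le a j) \<and> (\<forall>u\<in>X. (\<forall>a\<in>A. le a u) \<longrightarrow> le j u)"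

definition is_glb_in :: "('a \<Rightarrow> 'a \<Rightarrow> bool) \<Rightarrow> 'a set \<Rightarrow> 'a set \<Rightarrow> 'a \<Rightarrow> bool" where
  "is_glb_in le X A m \<longleftrightarrow> m \<in> X \<and> (\<forall>a\<in>A. le m a) \<and> (\<forall>u\<in>X. (\<forall>a\<in>A. le u a) \<longrightarrow> le u m)"

definition lub_in :: "('a \<Rightarrow> 'a \<Rightarrow> bool) \<Rightarrow> 'a set \<Rightarrow> 'a \<Rightarrow> 'a \<Rightarrow> 'a" where
  "lub_in le X x y = (THE j. is_lub_in le X {x, y} j)"

definition glb_in :: "('a \<Rightarrow> 'a \<Rightarrow> bool) \<Rightarrow> 'a set \<Rightarrow> 'a \<Rightarrow> 'a \<Rightarrow> 'a" where
  "glb_in le X x y = (THE m. is_glb_in le X {x, y} m)"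

definition boolean_algebra_on :: "'a set \<Rightarrow> ('a \<Rightarrow> 'a \<Rightarrow> bool) \<Rightarrow> bool" where
  "boolean_algebra_on X le \<longleftrightarrow>
     (\<forall>x\<in>X. le x x) \<and>
     (\<forall>x\<in>X. \<forall>y\<in>X. le x y \<and> le y x \<longrightarrow> x = y) \<and>
     (\<forall>x\<in>X. \<forall>y\<in>X. \<forall>z\<in>X. le x y \<and> le y z \<longrightarrow> le x z) \<and>
     (\<exists>bot\<in>X. \<exists>top\<in>X. (\<forall>x\<in>X. le bot x \<and> le x top) \<and>
       (\<forall>x\<in>X. \<forall>y\<in>X. (\<exists>j. is_lub_in le X {x, y} j) \<and> (\<exists>m. is_glb_in le X {x, y} m)) \<and>
       (\<forall>x\<in>X. \<forall>y\<in>X. \<forall>z\<in>X.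
          glb_in le X x (lub_in le X y z) = lub_in le X (glb_in le X x y) (glb_in le X x z)) \<and>
       (\<forall>x\<in>X. \<exists>y\<in>X. glb_in le X x y = bot \<and> lub_in le X x y = top))"

definition boolean_inverse_monoid :: "('a \<Rightarrow> 'a \<Rightarrow> 'a) \<Rightarrow> 'a \<Rightarrow> 'a \<Rightarrow> bool" where
  "boolean_inverse_monoid mul one z \<longleftrightarrow>
     inverse_semigroup mul \<and>
     (\<forall>s. mul one s = s \<and> mul s one = s) \<and>
     (\<forall>s. mul z s = z \<and> mul s z = z) \<and>
     (\<forall>A. finite A \<and> compatible_set mul A \<longrightarrow> (\<exists>j. is_lub_in (nleq mul) UNIV A j)) \<and>
     (\<forall>A j s. finite A \<and> compatible_set mul A \<and> is_lub_in (nleq mul) UNIV A j \<longrightarrow>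
        is_lub_in (nleq mul) UNIV ((\<lambda>a. mul s a) ` A) (mul s j) \<and>
        is_lub_in (nleq mul) UNIV ((\<lambda>a. mul a s) ` A) (mul j s)) \<and>
     boolean_algebra_on {e. idem mul e} (nleq mul)"

definition fundamental :: "('a \<Rightarrow> 'a \<Rightarrow> 'a) \<Rightarrow> bool" where
  "fundamental mul \<longleftrightarrow>
     (\<forall>s. (\<forall>e. idem mul e \<longrightarrow> mul s e = mul e s) \<longrightarrow> idem mul s)"

definition is_atom :: "('a \<Rightarrow> 'a \<Rightarrow> 'a) \<Rightarrow> 'a \<Rightarrow> 'a \<Rightarrow> bool" where
  "is_atom mul z s \<longleftrightarrow> s \<noteq> z \<and> (\<forall>t. nleq mul t s \<longrightarrow> t = z \<or> t = s)"

text \<open>Groupoid of atoms: arrows are the atoms, an atom x goes from its domain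
  identity x^{-1}x to its range identity x x^{-1}; the product x\<cdot>y = xy is
  defined when x^{-1}x = y y^{-1}.\<close>
definition atom_groupoid_principal :: "('a \<Rightarrow> 'a \<Rightarrow> 'a) \<Rightarrow> 'a \<Rightarrow> bool" where
  "atom_groupoid_principal mul z \<longleftrightarrow>
     (\<forall>x y. is_atom mul z x \<and> is_atom mul z y \<and>
        mul (sinv mul x) x = mul (sinv mul y) y \<and>
        mul x (sinv mul x) = mul y (sinv mul y) \<longrightarrow> x = y)"

end

theory Submission
  imports Defs
begin

(* If two atoms x \<noteq> y have the same domain and range e, then g = x\<inverse>y lies in the local
   group at the atom e and is not idempotent.  Every idempotent either fixes or annihilates
   e, so the join of g with the complement of e commutes with all idempotents without being
   idempotent.  Conversely, if s commutes with all idempotents then s\<inverse>s = ss\<inverse> = e, and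
   for every atom f \<le> e the atom sf runs from f to f, so principality gives sf = f.  In the
   finite case an idempotent strictly below e misses some atom below e, hence the greatest
   idempotent below s is e itself, i.e. e \<le> s and s = se = e. *)

lemma is_lub_in_subset:
  "is_lub_in le UNIV A j \<Longrightarrow> j \<in> X \<Longrightarrow> is_lub_in le X A j"
  unfolding is_lub_in_def by blast

locale inv_semigroup =
  fixes mul :: "'a \<Rightarrow> 'a \<Rightarrow> 'a" (infixl "\<cdot>" 70)
  assumes inverse_semigroup: "inverse_semigroup mul"
begin

abbreviation iv :: "'a \<Rightarrow> 'a" where "iv \<equiv> sinv mul"

lemma assoc [simp]: "a \<cdot> b \<cdot> c = a \<cdot> (b \<cdot> c)"
  using inverse_semigroup unfolding inverse_semigroup_def by blast

lemma ex1_sinv: "\<exists>!t. s = s \<cdot> t \<cdot> s \<and> t = t \<cdot> s \<cdot> t"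
  using inverse_semigroup unfolding inverse_semigroup_def by blast

lemma sinv_laws: "s \<cdot> iv s \<cdot> s = s" "iv s \<cdot> s \<cdot> iv s = iv s"
  using theI'[OF ex1_sinv, of s] unfolding sinv_def by auto

lemma mul_sinv_mul [simp]: "s \<cdot> (iv s \<cdot> s) = s" "s \<cdot> (iv s \<cdot> (s \<cdot> t)) = s \<cdot> t"
  using sinv_laws(1) by (simp, metis assoc)

lemma sinv_mul_sinv [simp]: "iv s \<cdot> (s \<cdot> iv s) = iv s" "iv s \<cdot> (s \<cdot> (iv s \<cdot> t)) = iv s \<cdot> t"
  using sinv_laws(2) by (simp, metis assoc)

lemma sinv_eqI: "s \<cdot> (t \<cdot> s) = s \<Longrightarrow> t \<cdot> (s \<cdot> t) = t \<Longrightarrow> iv s = t"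
  using ex1_sinv[of s] sinv_laws[of s] by (metis assoc)

lemma idem_dom: "iv s \<cdot> s \<cdot> (iv s \<cdot> s) = iv s \<cdot> s"
  by simp

lemma idem_ran: "s \<cdot> iv s \<cdot> (s \<cdot> iv s) = s \<cdot> iv s"
  by simp

lemma sinv_idem: "e \<cdot> e = e \<Longrightarrow> iv e = e"
  by (rule sinv_eqI) simp_all

text \<open>The classical argument: \<open>(e f)\<inverse> = f (e f)\<inverse> e\<close>, which makes \<open>(e f)\<inverse>\<close>, and hence
  \<open>e f\<close>, idempotent.\<close>

lemma idem_mul:
  assumes e: "e \<cdot> e = e" and f: "f \<cdot> f = f"
  shows "e \<cdot> f \<cdot> (e \<cdot> f) = e \<cdot> f"
proof -
  define x where "x = iv (e \<cdot> f)"
  have x1: "e \<cdot> f \<cdot> x \<cdot> (e \<cdot> f) = e \<cdot> f" and x2: "x \<cdot> (e \<cdot> f) \<cdot> x = x"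
    using sinv_laws[of "e \<cdot> f"] unfolding x_def by auto
  have "iv (e \<cdot> f) = f \<cdot> x \<cdot> e"
    by (rule sinv_eqI) (use x1 x2 e f in \<open>metis assoc\<close>)+
  then have x: "x = f \<cdot> x \<cdot> e"
    unfolding x_def .
  have xx: "x \<cdot> x = x"
    by (metis x x2 assoc)
  have "e \<cdot> f = iv x"
    using sinv_eqI[of x "e \<cdot> f"] x1 x2 by (metis assoc)
  also have "\<dots> = x"
    by (rule sinv_idem[OF xx])
  finally show ?thesis
    using xx by simp
qed

lemma idem_commute:
  assumes e: "e \<cdot> e = e" and f: "f \<cdot> f = f"
  shows "e \<cdot> f = f \<cdot> e"
proof -
  have ef: "e \<cdot> f \<cdot> (e \<cdot> f) = e \<cdot> f" and fe: "f \<cdot> e \<cdot> (f \<cdot> e) = f \<cdot> e"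
    using idem_mul e f by blast+
  have "e \<cdot> f = iv (e \<cdot> f)"
    using sinv_idem[OF ef] by simp
  also have "\<dots> = f \<cdot> e"
    by (rule sinv_eqI) (use ef fe e f in \<open>metis assoc\<close>)+
  finally show ?thesis .
qed

lemma sinv_sinv [simp]: "iv (iv s) = s"
  by (rule sinv_eqI) simp_all

lemma sinv_mul: "iv (a \<cdot> b) = iv b \<cdot> iv a"
proof (rule sinv_eqI)
  have commute: "iv a \<cdot> a \<cdot> (b \<cdot> iv b) = b \<cdot> iv b \<cdot> (iv a \<cdot> a)"
    using idem_commute[OF idem_dom idem_ran] .
  show "a \<cdot> b \<cdot> (iv b \<cdot> iv a \<cdot> (a \<cdot> b)) = a \<cdot> b"
    using commute by (metis assoc mul_sinv_mul)
  show "iv b \<cdot> iv a \<cdot> (a \<cdot> b \<cdot> (iv b \<cdot> iv a)) = iv b \<cdot> iv a"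
    using commute by (metis assoc sinv_mul_sinv)
qed

lemma nleq_iff_idem_factor: "nleq mul s t \<longleftrightarrow> (\<exists>d. d \<cdot> d = d \<and> s = t \<cdot> d)"
proof
  assume "nleq mul s t"
  then show "\<exists>d. d \<cdot> d = d \<and> s = t \<cdot> d"
    unfolding nleq_def by (intro exI[of _ "iv s \<cdot> s"]) auto
next
  assume "\<exists>d. d \<cdot> d = d \<and> s = t \<cdot> d"
  then obtain d where d: "d \<cdot> d = d" and s: "s = t \<cdot> d"
    by blast
  have "iv s \<cdot> s = d \<cdot> (iv t \<cdot> t) \<cdot> d"
    using s sinv_mul sinv_idem[OF d] by simp
  then have "t \<cdot> (iv s \<cdot> s) = t \<cdot> (iv t \<cdot> t) \<cdot> d \<cdot> d"
    using idem_commute[OF d idem_dom[of t]] by simp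
  then show "nleq mul s t"
    unfolding nleq_def using s d by simp
qed

lemma nleq_refl: "nleq mul s s"
  unfolding nleq_def by simp

lemma nleq_trans: "nleq mul s t \<Longrightarrow> nleq mul t u \<Longrightarrow> nleq mul s u"
  unfolding nleq_iff_idem_factor by (metis assoc idem_mul)

lemma nleq_antisym: 
  assumes "nleq mul s t" and "nleq mul t s"
  shows "s = t"
proof -
  define d where "d = iv s \<cdot> s"
  define d' where "d' = iv t \<cdot> t"
  have s: "s = t \<cdot> d" and t: "t = s \<cdot> d'"
    using assms unfolding nleq_def d_def d'_def by auto
  have d: "d \<cdot> d = d" and d': "d' \<cdot> d' = d'"
    unfolding d_def d'_def by simp_all
  have "d = d \<cdot> d' \<cdot> d"
    using s sinv_mul sinv_idem[OF d] unfolding d_def d'_def by (metis assoc)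
  then have "d = d \<cdot> d'"
    using idem_commute[OF d d'] d by (metis assoc)
  moreover have "d' = d' \<cdot> d \<cdot> d'"
    using t sinv_mul sinv_idem[OF d'] unfolding d_def d'_def by (metis assoc)
  then have "d' = d' \<cdot> d"
    using idem_commute[OF d d'] d' by (metis assoc)
  ultimately have "d = d'"
    using idem_commute[OF d d'] by simp
  then show ?thesis
    using s t unfolding d'_def by (metis mul_sinv_mul(1))
qed

lemma idem_nleq_iff: "e \<cdot> e = e \<Longrightarrow> nleq mul e s \<longleftrightarrow> s \<cdot> e = e"
  unfolding nleq_def using sinv_idem by auto

lemma nleq_idem: "t \<cdot> t = t \<Longrightarrow> nleq mul s t \<Longrightarrow> s \<cdot> s = s"
  unfolding nleq_iff_idem_factor using idem_mul by (metis assoc)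

lemma nleq_dom: 
  assumes "nleq mul s t"
  shows "nleq mul (iv s \<cdot> s) (iv t \<cdot> t)"
proof -
  obtain d where d: "d \<cdot> d = d" and s: "s = t \<cdot> d"
    using assms nleq_iff_idem_factor by blast
  have "iv s \<cdot> s = iv t \<cdot> t \<cdot> d"
    using s sinv_mul sinv_idem[OF d] idem_commute[OF d idem_dom[of t]] d by (metis assoc)
  then show ?thesis
    using d nleq_iff_idem_factor by blast
qed

lemma is_lub_unique: "is_lub_in (nleq mul) X A j \<Longrightarrow> is_lub_in (nleq mul) X A j' \<Longrightarrow> j = j'"
  unfolding is_lub_in_def using nleq_antisym by blast

lemma lub_in_eqI: "is_lub_in (nleq mul) X {x, y} j \<Longrightarrow> lub_in (nleq mul) X x y = j"
  unfolding lub_in_def using is_lub_unique by blast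

lemma glb_in_eqI: "is_glb_in (nleq mul) X {x, y} m \<Longrightarrow> glb_in (nleq mul) X x y = m"
  unfolding glb_in_def is_glb_in_def using nleq_antisym by (intro the_equality) blast+

lemma commute_idems_dom_eq_ran:
  assumes comm: "\<And>f. f \<cdot> f = f \<Longrightarrow> s \<cdot> f = f \<cdot> s"
  shows "s \<cdot> iv s = iv s \<cdot> s"
proof -
  have sinv_comm: "iv s \<cdot> f = f \<cdot> iv s" if f: "f \<cdot> f = f" for f
    using arg_cong[OF comm[OF f], of iv] sinv_mul sinv_idem[OF f] by simp
  have "iv s \<cdot> s = (s \<cdot> iv s) \<cdot> (iv s \<cdot> s)"
    using sinv_comm[OF idem_ran[of s]] by (metis assoc sinv_mul_sinv(1))
  moreover have "s \<cdot> iv s = (iv s \<cdot> s) \<cdot> (s \<cdot> iv s)"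
    using comm[OF idem_dom[of s]] by (metis assoc mul_sinv_mul(1))
  ultimately show ?thesis
    using idem_commute[OF idem_dom idem_ran] by simp
qed

end

locale inv_semigroup_zero = inv_semigroup +
  fixes z :: 'a
  assumes zero_left [simp]: "z \<cdot> s = z" and zero_right [simp]: "s \<cdot> z = z"
begin

lemma zero_nleq: "nleq mul z s"
  unfolding nleq_def by simp

lemma is_atom_dom:
  assumes x: "is_atom mul z x"
  shows "is_atom mul z (iv x \<cdot> x)"
  unfolding is_atom_def
proof (intro conjI allI impI)
  show "iv x \<cdot> x \<noteq> z"
    using x unfolding is_atom_def by (metis mul_sinv_mul(1) zero_right)
  fix t
  assume t: "nleq mul t (iv x \<cdot> x)"
  then have tt: "t \<cdot> t = t" and t_eq: "iv x \<cdot> x \<cdot> t = t"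
    using nleq_idem[OF idem_dom] idem_nleq_iff by blast+
  have "nleq mul (x \<cdot> t) x"
    using nleq_iff_idem_factor tt by blast
  then have "x \<cdot> t = z \<or> x \<cdot> t = x"
    using x unfolding is_atom_def by blast
  then show "t = z \<or> t = iv x \<cdot> x"
    using t_eq by (metis assoc zero_right)
qed

lemma is_atom_if_dom:
  assumes dom: "is_atom mul z (iv x \<cdot> x)"
  shows "is_atom mul z x"
  unfolding is_atom_def
proof (intro conjI allI impI)
  show "x \<noteq> z"
    using dom unfolding is_atom_def by auto
  fix t
  assume t: "nleq mul t x"
  then have "t = x \<cdot> (iv t \<cdot> t)"
    unfolding nleq_def .
  moreover have "iv t \<cdot> t = z \<or> iv t \<cdot> t = iv x \<cdot> x"
    using dom nleq_dom[OF t] unfolding is_atom_def by blast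
  ultimately show "t = z \<or> t = x"
    by (metis mul_sinv_mul(1) zero_right)
qed

lemma atom_mul_idem:
  assumes "is_atom mul z e" and f: "f \<cdot> f = f"
  shows "e \<cdot> f = z \<or> e \<cdot> f = e"
  using assms nleq_iff_idem_factor unfolding is_atom_def by blast

lemma commute_idems_if_dom_ran_atom:
  assumes e: "is_atom mul z e" "e \<cdot> e = e"
    and dom: "iv g \<cdot> g = e" and ran: "g \<cdot> iv g = e"
    and f: "f \<cdot> f = f"
  shows "f \<cdot> g = g \<cdot> f"
proof -
  have eg: "e \<cdot> g = g" and ge: "g \<cdot> e = g"
    using dom ran by (metis assoc mul_sinv_mul(1))+
  have fe: "f \<cdot> e = e \<cdot> f"
    using idem_commute[OF f e(2)] .
  from atom_mul_idem[OF e(1) f] show ?thesis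
  proof
    assume "e \<cdot> f = z"
    then show ?thesis
      using eg ge fe by (metis assoc zero_left zero_right)
  next
    assume "e \<cdot> f = e"
    then show ?thesis
      using eg ge fe by (metis assoc)
  qed
qed

lemma compatible_if_orthogonal:
  assumes dom: "iv a \<cdot> a \<cdot> (iv b \<cdot> b) = z" and ran: "a \<cdot> iv a \<cdot> (b \<cdot> iv b) = z"
  shows "compatible mul a b"
proof -
  have "iv a \<cdot> b = z"
    using ran by (metis assoc sinv_mul_sinv(2) mul_sinv_mul(1) zero_left zero_right)
  moreover have "a \<cdot> iv b = z"
    using dom by (metis assoc sinv_mul_sinv(1) mul_sinv_mul(2) zero_left zero_right)
  ultimately show ?thesis
    unfolding compatible_def idem_def by simp
qed

lemma compatible_refl: "compatible mul a a"
  unfolding compatible_def idem_def by simp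

lemma compatible_sym: "compatible mul a b \<Longrightarrow> compatible mul b a"
  unfolding compatible_def idem_def by (metis sinv_mul sinv_sinv sinv_idem)

lemma compatible_set_pair: "compatible mul a b \<Longrightarrow> compatible_set mul {a, b}"
  unfolding compatible_set_def using compatible_refl compatible_sym by blast

end

locale boolean_inv_monoid =
  fixes mul :: "'a \<Rightarrow> 'a \<Rightarrow> 'a" (infixl "\<cdot>" 70) and one z :: 'a
  assumes boolean_inverse_monoid: "boolean_inverse_monoid mul one z"

sublocale boolean_inv_monoid \<subseteq> inv_semigroup_zero mul z
  using boolean_inverse_monoid unfolding boolean_inverse_monoid_def
  by unfold_locales blast+

context boolean_inv_monoid
begin

lemma one_left [simp]: "one \<cdot> s = s" and one_right [simp]: "s \<cdot> one = s"
  using boolean_inverse_monoid unfolding boolean_inverse_monoid_def by blast+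

lemma ex_lub: "finite A \<Longrightarrow> compatible_set mul A \<Longrightarrow> \<exists>j. is_lub_in (nleq mul) UNIV A j"
  using boolean_inverse_monoid unfolding boolean_inverse_monoid_def by blast

lemma is_lub_mult:
  assumes "finite A" "compatible_set mul A" "is_lub_in (nleq mul) UNIV A j"
  shows is_lub_mult_left: "is_lub_in (nleq mul) UNIV ((\<lambda>a. s \<cdot> a) ` A) (s \<cdot> j)"
    and is_lub_mult_right: "is_lub_in (nleq mul) UNIV ((\<lambda>a. a \<cdot> s) ` A) (j \<cdot> s)"
  using assms boolean_inverse_monoid unfolding boolean_inverse_monoid_def by blast+

lemma boolean_algebra_idems: "boolean_algebra_on {e. idem mul e} (nleq mul)"
  using boolean_inverse_monoid unfolding boolean_inverse_monoid_def by blast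

lemma idem_nleq_one: "e \<cdot> e = e \<Longrightarrow> nleq mul e one"
  using idem_nleq_iff by simp

lemma nleq_one_idem: "nleq mul s one \<Longrightarrow> s \<cdot> s = s"
  using nleq_idem[of one s] by simp

lemma compatible_idems: "e \<cdot> e = e \<Longrightarrow> f \<cdot> f = f \<Longrightarrow> compatible mul e f"
  unfolding compatible_def idem_def using sinv_idem idem_mul by simp

lemma ex_lub_idems:
  assumes "finite A" and idems: "\<forall>e\<in>A. e \<cdot> e = e"
  obtains j where "is_lub_in (nleq mul) UNIV A j" and "j \<cdot> j = j"
proof -
  have "compatible_set mul A"
    unfolding compatible_set_def using idems compatible_idems by blast
  then obtain j where j: "is_lub_in (nleq mul) UNIV A j"
    using ex_lub \<open>finite A\<close> by blast
  then have "nleq mul j one"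
    using idems idem_nleq_one unfolding is_lub_in_def by blast
  then show thesis
    using that j nleq_one_idem by blast
qed

lemma is_lub_zero: "is_lub_in (nleq mul) UNIV {g, z} g"
  unfolding is_lub_in_def using nleq_refl zero_nleq by simp

lemma lub_commute:
  assumes "finite A" "compatible_set mul A" and j: "is_lub_in (nleq mul) UNIV A j"
    and comm: "\<forall>a\<in>A. f \<cdot> a = a \<cdot> f"
  shows "f \<cdot> j = j \<cdot> f"
proof -
  have "(\<lambda>a. f \<cdot> a) ` A = (\<lambda>a. a \<cdot> f) ` A"
    using comm by (auto intro: image_cong)
  then show ?thesis
    using is_lub_mult_left[OF assms(1-3)] is_lub_mult_right[OF assms(1-3)] is_lub_unique
    by metis
qed

lemma is_glb_in_idems:
  assumes e: "e \<cdot> e = e" and f: "f \<cdot> f = f"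
  shows "is_glb_in (nleq mul) {e. idem mul e} {e, f} (e \<cdot> f)"
proof -
  have ef: "e \<cdot> f \<cdot> (e \<cdot> f) = e \<cdot> f"
    using idem_mul[OF e f] .
  have "nleq mul (e \<cdot> f) e" and "nleq mul (e \<cdot> f) f"
    using idem_nleq_iff[OF ef] e f idem_commute[OF e f] by (metis assoc)+
  moreover have "nleq mul u (e \<cdot> f)" if "u \<cdot> u = u" "nleq mul u e" "nleq mul u f" for u
    using that idem_nleq_iff by (metis assoc)
  ultimately show ?thesis
    unfolding is_glb_in_def idem_def using ef by auto
qed

lemma complement_idem:
  assumes e: "e \<cdot> e = e"
  obtains c where "c \<cdot> c = c" "e \<cdot> c = z" "is_lub_in (nleq mul) UNIV {e, c} one"
proof -
  let ?E = "{e. idem mul e}"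
  obtain bot top where "bot \<in> ?E" "top \<in> ?E" and bounds: "\<forall>x\<in>?E. nleq mul bot x \<and> nleq mul x top"
    and complemented: "\<forall>x\<in>?E. \<exists>y\<in>?E. glb_in (nleq mul) ?E x y = bot \<and> lub_in (nleq mul) ?E x y = top"
    using boolean_algebra_idems unfolding boolean_algebra_on_def by blast
  have "bot = z"
    using bounds zero_nleq nleq_antisym by (simp add: idem_def)
  moreover have "top = one"
    using bounds \<open>top \<in> ?E\<close> idem_nleq_one nleq_antisym by (simp add: idem_def)
  ultimately obtain c where c: "c \<cdot> c = c" and glb: "glb_in (nleq mul) ?E e c = z"
    and lub: "lub_in (nleq mul) ?E e c = one"
    using complemented e by (auto simp: idem_def)
  have "e \<cdot> c = z"
    using glb glb_in_eqI[OF is_glb_in_idems[OF e c]] by simp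
  moreover obtain j where j: "is_lub_in (nleq mul) UNIV {e, c} j" and "j \<cdot> j = j"
    using ex_lub_idems[of "{e, c}"] e c by auto
  then have "j = one"
    using lub lub_in_eqI is_lub_in_subset by (metis idem_def mem_Collect_eq)
  ultimately show thesis
    using that c j by blast
qed

lemma card_down_set_less:
  assumes fin: "finite (UNIV :: 'a set)" and "nleq mul u t" and "u \<noteq> t"
  shows "card {x. nleq mul x u} < card {x. nleq mul x t}"
proof (rule psubset_card_mono)
  show "finite {x. nleq mul x t}"
    using fin by (rule finite_subset[rotated]) simp
  show "{x. nleq mul x u} \<subset> {x. nleq mul x t}"
    using assms(2,3) nleq_trans nleq_refl nleq_antisym by blast
qed

lemma ex_atom_below:
  assumes fin: "finite (UNIV :: 'a set)" and "k \<noteq> z"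
  obtains f where "is_atom mul z f" and "nleq mul f k"
proof -
  let ?P = "\<lambda>t. t \<noteq> z \<and> nleq mul t k"
  obtain t where t: "?P t" and least: "\<And>u. ?P u \<Longrightarrow> card {x. nleq mul x t} \<le> card {x. nleq mul x u}"
    using ex_has_least_nat[of ?P k "\<lambda>t. card {x. nleq mul x t}"] \<open>k \<noteq> z\<close> nleq_refl by blast
  have "is_atom mul z t"
    unfolding is_atom_def
  proof (intro conjI allI impI)
    show "t \<noteq> z"
      using t by simp
    fix u
    assume u: "nleq mul u t"
    show "u = z \<or> u = t"
    proof (rule ccontr)
      assume "\<not> (u = z \<or> u = t)"
      then have "?P u" and "u \<noteq> t"
        using u t nleq_trans by blast+
      then show False
        using least[of u] card_down_set_less[OF fin u] by simp
    qed
  qed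
  then show thesis
    using that t by blast
qed

lemma ex_atom_disjoint:
  assumes fin: "finite (UNIV :: 'a set)" and h: "h \<cdot> h = h" and e: "e \<cdot> e = e"
    and "nleq mul h e" and "h \<noteq> e"
  obtains f where "is_atom mul z f" "f \<cdot> f = f" "nleq mul f e" "h \<cdot> f = z"
proof -
  obtain c where c: "c \<cdot> c = c" and hc: "h \<cdot> c = z" and lub: "is_lub_in (nleq mul) UNIV {h, c} one"
    using complement_idem[OF h] .
  have "is_lub_in (nleq mul) UNIV {e \<cdot> h, e \<cdot> c} e"
    using is_lub_mult_left[OF _ compatible_set_pair[OF compatible_idems[OF h c]] lub, of e] by simp
  then have "is_lub_in (nleq mul) UNIV {h, e \<cdot> c} e"
    using \<open>nleq mul h e\<close> idem_nleq_iff[OF h] by simp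
  then have "e \<cdot> c \<noteq> z"
    using is_lub_unique[OF is_lub_zero[of h]] \<open>h \<noteq> e\<close> by blast
  then obtain f where f: "is_atom mul z f" and f_le: "nleq mul f (e \<cdot> c)"
    using ex_atom_below[OF fin] by blast
  have ec: "e \<cdot> c \<cdot> (e \<cdot> c) = e \<cdot> c"
    using idem_mul[OF e c] .
  have ff: "f \<cdot> f = f"
    using nleq_idem[OF ec f_le] .
  have "nleq mul f e"
    using nleq_trans[OF f_le] nleq_iff_idem_factor c by blast
  moreover have "h \<cdot> f = z"
  proof -
    have "h \<cdot> f = h \<cdot> (e \<cdot> c \<cdot> f)"
      using f_le idem_nleq_iff[OF ff] by simp
    also have "\<dots> = e \<cdot> (h \<cdot> c) \<cdot> f"
      using idem_commute[OF e h] by (metis assoc)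
    finally show ?thesis
      using hc by simp
  qed
  ultimately show thesis
    using that f ff by blast
qed

lemma ex_greatest_idem_below:
  assumes fin: "finite (UNIV :: 'a set)"
  obtains h where "h \<cdot> h = h" "nleq mul h s" "\<And>f. f \<cdot> f = f \<Longrightarrow> nleq mul f s \<Longrightarrow> nleq mul f h"
proof -
  let ?A = "{f. f \<cdot> f = f \<and> nleq mul f s}"
  obtain h where "is_lub_in (nleq mul) UNIV ?A h" "h \<cdot> h = h"
    using ex_lub_idems[of ?A] finite_subset[OF subset_UNIV fin] by blast
  then show thesis
    using that unfolding is_lub_in_def by blast
qed

lemma atom_groupoid_principal_if_fundamental:
  assumes "fundamental mul"
  shows "atom_groupoid_principal mul z"
  unfolding atom_groupoid_principal_def
proof (intro allI impI, elim conjE)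
  fix x y
  assume x: "is_atom mul z x"
    and dom: "iv x \<cdot> x = iv y \<cdot> y" and ran: "x \<cdot> iv x = y \<cdot> iv y"
  define e where "e = iv x \<cdot> x"
  define g where "g = iv x \<cdot> y"
  have e_idem: "e \<cdot> e = e" and e_atom: "is_atom mul z e"
    unfolding e_def using is_atom_dom[OF x] by simp_all
  have dom_g: "iv g \<cdot> g = e"
  proof -
    have "iv g \<cdot> g = iv y \<cdot> (x \<cdot> iv x) \<cdot> y"
      unfolding g_def by (simp add: sinv_mul)
    also have "\<dots> = e"
      unfolding ran e_def dom by simp
    finally show ?thesis .
  qed
  have ran_g: "g \<cdot> iv g = e"
  proof -
    have "g \<cdot> iv g = iv x \<cdot> (y \<cdot> iv y) \<cdot> x"
      unfolding g_def by (simp add: sinv_mul)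
    also have "\<dots> = e"
      unfolding ran[symmetric] e_def by simp
    finally show ?thesis .
  qed
  obtain c where c: "c \<cdot> c = c" and ec: "e \<cdot> c = z"
    using complement_idem[OF e_idem] by blast
  have "compatible_set mul {g, c}"
    using compatible_if_orthogonal[of g c, unfolded dom_g ran_g sinv_idem[OF c] c] ec
    by (blast intro: compatible_set_pair)
  then obtain s where s: "is_lub_in (nleq mul) UNIV {g, c} s"
    using ex_lub[of "{g, c}"] by auto
  have "\<forall>f. f \<cdot> f = f \<longrightarrow> s \<cdot> f = f \<cdot> s"
  proof (intro allI impI)
    fix f
    assume f: "f \<cdot> f = f"
    have "\<forall>a\<in>{g, c}. f \<cdot> a = a \<cdot> f"
      using commute_idems_if_dom_ran_atom[OF e_atom e_idem dom_g ran_g f] idem_commute[OF f c]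
      by blast
    then show "s \<cdot> f = f \<cdot> s"
      using lub_commute[OF _ \<open>compatible_set mul {g, c}\<close> s] by simp
  qed
  then have "s \<cdot> s = s"
    using \<open>fundamental mul\<close> unfolding fundamental_def idem_def by blast
  have "g \<cdot> e = g"
    using dom_g by (metis mul_sinv_mul(1))
  then have "is_lub_in (nleq mul) UNIV {g, z} (s \<cdot> e)"
    using is_lub_mult_right[OF _ \<open>compatible_set mul {g, c}\<close> s, of e] ec idem_commute[OF e_idem c]
    by simp
  then have "g = s \<cdot> e"
    using is_lub_unique[OF is_lub_zero] by blast
  then have "g \<cdot> g = g"
    using idem_mul[OF \<open>s \<cdot> s = s\<close> e_idem] by simp
  then have "g = e"
    using dom_g sinv_idem by simp
  have "y = x \<cdot> iv x \<cdot> y"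
    unfolding ran by simp
  also have "\<dots> = x"
    using \<open>g = e\<close> unfolding g_def e_def by simp
  finally show "x = y" ..
qed

lemma fundamental_if_atom_groupoid_principal:
  assumes fin: "finite (UNIV :: 'a set)" and principal: "atom_groupoid_principal mul z"
  shows "fundamental mul"
  unfolding fundamental_def idem_def
proof (intro allI impI)
  fix s
  assume "\<forall>f. f \<cdot> f = f \<longrightarrow> s \<cdot> f = f \<cdot> s"
  then have comm: "\<And>f. f \<cdot> f = f \<Longrightarrow> s \<cdot> f = f \<cdot> s"
    by blast
  define e where "e = iv s \<cdot> s"
  have e: "e \<cdot> e = e" and ran: "s \<cdot> iv s = e"
    unfolding e_def using commute_idems_dom_eq_ran[OF comm] by simp_all
  have atom_below_s: "nleq mul f s"
    if f: "is_atom mul z f" "f \<cdot> f = f" and "nleq mul f e" for f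
  proof -
    have ef: "e \<cdot> f = f"
      using \<open>nleq mul f e\<close> idem_nleq_iff[OF f(2)] by simp
    have fe: "f \<cdot> e = f"
      using ef idem_commute[OF e f(2)] by simp
    have dom_f: "iv f \<cdot> f = f" and ran_f: "f \<cdot> iv f = f"
      using sinv_idem[OF f(2)] f(2) by simp_all
    have "iv (s \<cdot> f) \<cdot> (s \<cdot> f) = f \<cdot> e \<cdot> f"
      unfolding e_def by (simp add: sinv_mul sinv_idem[OF f(2)])
    then have dom_sf: "iv (s \<cdot> f) \<cdot> (s \<cdot> f) = f"
      using fe f(2) by simp
    have "s \<cdot> f \<cdot> iv (s \<cdot> f) = s \<cdot> (f \<cdot> f) \<cdot> iv s"
      by (simp add: sinv_mul sinv_idem[OF f(2)])
    also have "\<dots> = f \<cdot> (s \<cdot> iv s)"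
      using comm[OF f(2)] f(2) by (metis assoc)
    finally have ran_sf: "s \<cdot> f \<cdot> iv (s \<cdot> f) = f"
      using fe ran by simp
    have "is_atom mul z (s \<cdot> f)"
      using is_atom_if_dom[of "s \<cdot> f", unfolded dom_sf] f(1) .
    then have "s \<cdot> f = f"
      using principal[unfolded atom_groupoid_principal_def, rule_format, of "s \<cdot> f" f]
        f(1) dom_sf ran_sf dom_f ran_f by simp
    then show ?thesis
      using idem_nleq_iff[OF f(2)] by simp
  qed
  obtain h where h: "h \<cdot> h = h" and h_le_s: "nleq mul h s"
    and greatest: "\<And>f. f \<cdot> f = f \<Longrightarrow> nleq mul f s \<Longrightarrow> nleq mul f h"
    using ex_greatest_idem_below[OF fin] by blast
  have "h = e"
  proof (rule ccontr)
    assume "h \<noteq> e"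
    moreover have "nleq mul h e"
      using nleq_dom[OF h_le_s] sinv_idem[OF h] h unfolding e_def by simp
    ultimately obtain f where f: "is_atom mul z f" "f \<cdot> f = f" "nleq mul f e" and "h \<cdot> f = z"
      using ex_atom_disjoint[OF fin h e] by blast
    then have "f = z"
      using greatest[OF f(2) atom_below_s[OF f]] idem_nleq_iff[OF f(2)] by simp
    then show False
      using f(1) unfolding is_atom_def by simp
  qed
  then have "s = e"
    using h_le_s idem_nleq_iff[OF h] unfolding e_def by simp
  then show "s \<cdot> s = s"
    using e by simp
qed

end

theorem mainTheorem4:
  fixes mul :: "'a \<Rightarrow> 'a \<Rightarrow> 'a" and one z :: 'a
  assumes "finite (UNIV :: 'a set)"
    and "boolean_inverse_monoid mul one z"
  shows "fundamental mul \<longleftrightarrow> atom_groupoid_principal mul z"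
proof -
  interpret boolean_inv_monoid mul one z
    by (rule boolean_inv_monoid.intro) (rule assms(2))
  show ?thesis
    using atom_groupoid_principal_if_fundamental
      fundamental_if_atom_groupoid_principal[OF assms(1)] by blast
qed

end
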